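(* Let $K=\mathbb{Q}(\sqrt m)$ be a Deng–Li field and write its fundamental unit as $\varepsilon=a+b\sqrt m$ with $a,b\in\mathbb{Z}$. Then $a=4a'$ with $a'$ an odd integer.
   Context: A Deng–Li field is $K=\mathbb{Q}(\sqrt m)$, $m=\ell_1\ell_2\cdots\ell_n$ with $n\ge 2$ even and $\ell_1,\dots,\ell_n$ distinct primes such that: - $\ell_1\equiv3\pmod8$; - $\ell_i\equiv5\pmod8$ for $i\ge2$; - $\big(\frac{\ell_1}{\ell_2}\big)=-1$, and $\big(\frac{\ell_1}{\ell_j}\big)=1$ for $j\ge3$; - $\big(\frac{\ell_i}{\ell_j}\big)=-1$ for $2\le i<j\le n$ (Legendre symbols). Here $m\equiv7\pmod 8$, the ring of integers is $\mathbb{Z}[\sqrt m]$, and the fundamental unit has norm $1$. *)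

theory Defs
  imports "HOL-Number_Theory.Number_Theory"
begin

text \<open>Units of the ring Z[sqrt m] (for nonsquare m > 0, the ring of integers of Q(sqrt m)
  when m = 3 mod 4 squarefree): x + y sqrt m is a unit iff its norm x^2 - m y^2 is 1 or -1.\<close>
definition is_unit_Zsqrt :: "int \<Rightarrow> int \<Rightarrow> int \<Rightarrow> bool" where
  "is_unit_Zsqrt m x y \<longleftrightarrow> (x^2 - m * y^2 = 1 \<or> x^2 - m * y^2 = -1)"

definition fundamental_unit :: "int \<Rightarrow> int \<Rightarrow> int \<Rightarrow> bool" where
  "fundamental_unit m a b \<longleftrightarrow>
     is_unit_Zsqrt m a b \<and> of_int a + of_int b * sqrt (of_int m) > (1::real) \<and>
     (\<forall>x y. is_unit_Zsqrt m x y \<and> of_int x + of_int y * sqrt (of_int m) > (1::real) \<longrightarrow>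
        of_int a + of_int b * sqrt (of_int m) \<le> (of_int x + of_int y * sqrt (of_int m) :: real))"

end

theory Submission
  imports Defs "HOL-Computational_Algebra.Nth_Powers"
begin

text \<open>
  The fundamental unit \<open>\<epsilon> = a + b\<surd>m\<close> has norm 1, since \<open>-1\<close> is not a square modulo
  \<open>\<ell>\<^sub>1 \<equiv> 3 (mod 4)\<close>. If \<open>a\<close> is even, the coprime factors of \<open>(a + 1)(a - 1) = m b\<^sup>2\<close> are
  \<open>d u\<^sup>2\<close> and \<open>d' v\<^sup>2\<close> with \<open>d d' = m\<close>, so \<open>d u\<^sup>2 - d' v\<^sup>2 = 2\<close>; if \<open>a = 2k + 1\<close> is odd,
  then \<open>b = 2c\<close> and \<open>(k + 1) k = m c\<^sup>2\<close> gives \<open>d u\<^sup>2 - d' v\<^sup>2 = 1\<close> in the same way.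
  Reading such an equation modulo each \<open>\<ell>\<^sub>i\<close> produces a Legendre-symbol condition for every
  \<open>i\<close>; for Deng--Li primes these conditions force \<open>d = 1\<close> in the odd case, so that
  \<open>\<epsilon> = (u + v\<surd>m)\<^sup>2\<close> would not be fundamental, and in the even case they force \<open>d\<close> to be
  a product of an odd number of primes \<open>\<equiv> 5 (mod 8)\<close>, whence \<open>a + 1 = d u\<^sup>2 \<equiv> 5 (mod 8)\<close>.
\<close>

section \<open>Legendre symbols\<close>

lemma Legendre_cong:
  assumes "[x = y] (mod p)"
  shows "Legendre x p = Legendre y p"
proof -
  have "[x = 0] (mod p) \<longleftrightarrow> [y = 0] (mod p)" "QuadRes p x \<longleftrightarrow> QuadRes p y"
    unfolding QuadRes_def using assms by (meson cong_sym cong_trans)+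
  then show ?thesis by (simp add: Legendre_def)
qed

lemma Legendre_cases: "Legendre x p \<in> {-1, 0, 1}"
  by (simp add: Legendre_def)

lemma cong_imp_eq_if_small:
  fixes a b p :: int
  assumes "a \<in> {-1, 0, 1}" "b \<in> {-1, 0, 1}" "[a = b] (mod p)" "2 < p"
  shows "a = b"
proof -
  have "p dvd a - b" using assms(3) by (simp add: cong_iff_dvd_diff)
  moreover have "\<bar>a - b\<bar> < p" using assms(1,2,4) by (auto simp: abs_if)
  ultimately show ?thesis using dvd_imp_le_int[of "a - b" p] by fastforce
qed

lemma Legendre_mult:
  assumes "prime p" "2 < p"
  shows "Legendre (x * y) (int p) = Legendre x (int p) * Legendre y (int p)"
proof -
  have "[Legendre (x * y) (int p) = (x * y) ^ ((p - 1) div 2)] (mod int p)"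
    "[Legendre x (int p) * Legendre y (int p) = x ^ ((p - 1) div 2) * y ^ ((p - 1) div 2)] (mod int p)"
    using euler_criterion[OF assms] cong_mult by blast+
  then have "[Legendre (x * y) (int p) = Legendre x (int p) * Legendre y (int p)] (mod int p)"
    by (metis cong_sym cong_trans power_mult_distrib)
  moreover have "Legendre x (int p) * Legendre y (int p) \<in> {-1, 0, 1}"
    using Legendre_cases[of x "int p"] Legendre_cases[of y "int p"] by auto
  ultimately show ?thesis using cong_imp_eq_if_small[OF Legendre_cases] assms(2) by simp
qed

lemma Legendre_square:
  assumes "prime p" "\<not> int p dvd y"
  shows "Legendre (y\<^sup>2) (int p) = 1"
proof -
  have "\<not> [y\<^sup>2 = 0] (mod int p)"
    using assms by (simp add: cong_0_iff prime_dvd_power_int_iff prime_nat_iff_prime)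
  moreover have "QuadRes (int p) (y\<^sup>2)" unfolding QuadRes_def by (intro exI[of _ y]) simp
  ultimately show ?thesis by (simp add: Legendre_def)
qed

lemma Legendre_one:
  assumes "prime p"
  shows "Legendre 1 (int p) = 1"
proof -
  have "p \<noteq> 1" using assms by auto
  then show ?thesis using Legendre_square[OF assms, of 1] by simp
qed

lemma Legendre_prod:
  assumes "prime p" "2 < p" "finite S"
  shows "Legendre (\<Prod>j\<in>S. f j) (int p) = (\<Prod>j\<in>S. Legendre (f j) (int p))"
  using assms(3)
  by induction (simp_all add: Legendre_one[OF assms(1)] Legendre_mult[OF assms(1,2)])

lemma Legendre_minus_one:
  assumes "prime p" "2 < p"
  shows "Legendre (-1) (int p) = (if p mod 4 = 1 then 1 else -1)"
proof -
  have "odd p" using assms prime_odd_nat by blast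
  then have "p mod 4 = 1 \<and> even ((p - 1) div 2) \<or> p mod 4 = 3 \<and> odd ((p - 1) div 2)"
    by presburger
  then have "(-1::int) ^ ((p - 1) div 2) = (if p mod 4 = 1 then 1 else -1)" by auto
  then show ?thesis
    using euler_criterion[OF assms, of "-1"] cong_imp_eq_if_small[OF Legendre_cases] assms(2)
    by (cases "p mod 4 = 1") auto
qed

lemma Legendre_two:
  assumes "prime p" "p mod 8 = 3 \<or> p mod 8 = 5"
  shows "Legendre 2 (int p) = -1"
proof -
  have p2: "2 < p" using assms(2) by auto
  have "\<not> [2 = 0] (mod int p)"
    using p2 zdvd_imp_le[of "int p" 2] by (auto simp: cong_0_iff)
  then interpret G: GAUSS p 2 using assms(1) p2 by unfold_locales auto
  define h where "h = (int p - 1) div 2"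
  have "G.C = (\<lambda>x. x * 2) ` {0<..h}"
  proof -
    have "\<And>x. x \<in> {0<..h} \<Longrightarrow> (x * 2) mod int p = x * 2"
      unfolding h_def by (auto intro!: mod_pos_pos_trivial)
    then show ?thesis unfolding G.C_def G.B_def G.A_def h_def[symmetric] image_image
      by (auto intro!: image_cong)
  qed
  then have "G.E = (\<lambda>x. x * 2) ` {h div 2<..h}"
    unfolding G.E_def h_def[symmetric] by auto
  then have "card G.E = nat (h - h div 2)"
    by (simp add: card_image inj_on_def)
  moreover have "odd (h - h div 2)" "h - h div 2 \<ge> 0"
    using assms(2) unfolding h_def by presburger+
  ultimately have "odd (card G.E)" by (simp add: even_nat_iff)
  then show ?thesis using G.gauss_lemma by simp
qed

lemma Legendre_swap_if_1_mod_4: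
  assumes "prime p" "prime q" "2 < p" "2 < q" "p \<noteq> q" "p mod 4 = 1"
  shows "Legendre (int p) (int q) = Legendre (int q) (int p)"
proof -
  have "even ((p - 1) div 2)" using assms(6) by presburger
  then have "Legendre (int p) (int q) * Legendre (int q) (int p) = 1"
    using Quadratic_Reciprocity[OF assms(1,3,2,4,5)] by simp
  then show ?thesis
    using Legendre_cases[of "int p" "int q"] Legendre_cases[of "int q" "int p"] by auto
qed

lemma Legendre_eq_of_form:
  fixes D D' u v c :: int
  assumes "prime p" "2 < p" "int p dvd D'" "D * u\<^sup>2 - D' * v\<^sup>2 = c" "\<not> int p dvd c"
  shows "Legendre D (int p) = Legendre c (int p)"
proof -
  have "[D * u\<^sup>2 = c] (mod int p)"
    using assms(3,4) by (simp add: cong_iff_dvd_diff flip: assms(4))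
  then have "Legendre (D * u\<^sup>2) (int p) = Legendre c (int p)" by (rule Legendre_cong)
  moreover have "\<not> int p dvd u"
    using assms(3-5) by (metis dvd_diff dvd_mult dvd_mult2 power2_eq_square)
  ultimately show ?thesis
    using Legendre_square[OF assms(1)] by (simp add: Legendre_mult[OF assms(1,2)])
qed

section \<open>Splitting a coprime factorization\<close>

lemma prod_distinct_primes_dvd:
  fixes l :: "'a \<Rightarrow> nat" and z :: int
  assumes "finite S" "\<forall>i\<in>S. prime (l i)" "inj_on l S" "\<forall>i\<in>S. int (l i) dvd z"
  shows "(\<Prod>i\<in>S. int (l i)) dvd z"
  using assms
proof (induction S rule: finite_induct)
  case empty
  then show ?case by simp
next
  case (insert x F)
  have "coprime (int (l x)) (\<Prod>i\<in>F. int (l i))"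
  proof (rule prod_coprime_right)
    fix i assume "i \<in> F"
    then have "l x \<noteq> l i" "prime (l x)" "prime (l i)"
      using insert by (auto simp: inj_on_def)
    then show "coprime (int (l x)) (int (l i))" using primes_coprime by auto
  qed
  with insert show ?case by (simp add: inj_on_insert divides_mult)
qed

lemma coprime_mult_square_imp_square:
  fixes x y c :: int
  assumes "x > 0" "y > 0" "coprime x y" "x * y = c\<^sup>2"
  shows "\<exists>u>0. x = u\<^sup>2"
proof -
  have "coprime (nat x) (nat y)" using assms(1-3) by (simp add: coprime_int_iff[symmetric])
  moreover have "nat x * nat y = (nat \<bar>c\<bar>)\<^sup>2"
    using assms(1,2,4) by (metis nat_mult_distrib nat_power_eq power2_abs abs_ge_zero less_imp_le)
  ultimately have "is_nth_power 2 (nat x)"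
    using is_nth_power_mult_coprime_natD(1) assms(1,2) by fastforce
  then obtain w where "nat x = w\<^sup>2" by (auto simp: is_nth_power_def)
  then have "x = (int w)\<^sup>2" using assms(1) by (metis int_nat_eq of_nat_power less_imp_le)
  with assms(1) show ?thesis by (intro exI[of _ "int w"]) (auto simp: zero_less_power2)
qed

text \<open>
  The primes dividing \<open>x\<close> go to \<open>S\<close>, the others divide \<open>y\<close>; after dividing out, the
  cofactors are coprime with a square product, hence squares.
\<close>
lemma coprime_factors_of_prod_primes_square:
  fixes x y c :: int and l :: "'a \<Rightarrow> nat"
  assumes "finite I" "\<forall>i\<in>I. prime (l i)" "inj_on l I"
    and "x > 0" "y > 0" "coprime x y"
    and xy: "x * y = (\<Prod>i\<in>I. int (l i)) * c\<^sup>2"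
  shows "\<exists>S u v. S \<subseteq> I \<and> u > 0 \<and> v > 0 \<and>
           x = (\<Prod>i\<in>S. int (l i)) * u\<^sup>2 \<and> y = (\<Prod>i\<in>I - S. int (l i)) * v\<^sup>2"
proof -
  define S where "S = {i\<in>I. int (l i) dvd x}"
  define d where "d = (\<Prod>i\<in>S. int (l i))"
  define d' where "d' = (\<Prod>i\<in>I - S. int (l i))"
  have SI: "S \<subseteq> I" unfolding S_def by auto
  have "d dvd x" unfolding d_def
    by (rule prod_distinct_primes_dvd)
      (use assms(1-3) SI in \<open>auto simp: S_def intro: finite_subset inj_on_subset\<close>)
  then obtain x' where x': "x = d * x'" by blast
  have "int (l i) dvd y" if "i \<in> I - S" for i
  proof -
    have "int (l i) dvd (\<Prod>i\<in>I. int (l i))" using that assms(1) by (intro dvd_prodI) auto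
    then have "int (l i) dvd x * y" unfolding xy by simp
    moreover have "prime (int (l i))" using that assms(2) by auto
    ultimately show ?thesis using that prime_dvd_mult_iff unfolding S_def by blast
  qed
  then have "d' dvd y" unfolding d'_def
    by (intro prod_distinct_primes_dvd) (use assms(1-3) in \<open>auto intro: inj_on_subset\<close>)
  then obtain y' where y': "y = d' * y'" by blast
  have "d > 0" "d' > 0"
    unfolding d_def d'_def using assms(2) SI by (auto intro!: prod_pos simp: prime_gt_0_nat)
  moreover have "(\<Prod>i\<in>I. int (l i)) = d' * d"
    unfolding d_def d'_def using prod.subset_diff[OF SI assms(1)] by simp
  ultimately have "x' * y' = c\<^sup>2" "x' > 0" "y' > 0"
    using xy x' y' assms(4,5) by (auto simp: algebra_simps zero_less_mult_iff)
  moreover have "coprime x' y'" using assms(6) x' y' by simp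
  ultimately obtain u v where "u > 0" "x' = u\<^sup>2" "v > 0" "y' = v\<^sup>2"
    using coprime_mult_square_imp_square[of x' y' c] coprime_mult_square_imp_square[of y' x' c]
    by (auto simp: coprime_commute mult.commute)
  with SI x' y' show ?thesis unfolding d_def d'_def by blast
qed

section \<open>Units of \<open>\<int>[\<surd>m]\<close>\<close>

lemma norm_ne_minus_one:
  fixes m x y :: int
  assumes "prime p" "p mod 4 = 3" "int p dvd m"
  shows "x\<^sup>2 - m * y\<^sup>2 \<noteq> -1"
proof
  assume "x\<^sup>2 - m * y\<^sup>2 = -1"
  then have "1 * x\<^sup>2 - m * y\<^sup>2 = -1" by simp
  moreover have "2 < p" "\<not> int p dvd -1" using assms(1,2) by (auto simp: prime_gt_1_nat)
  ultimately have "Legendre 1 (int p) = Legendre (-1) (int p)"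
    using Legendre_eq_of_form assms(1,3) by blast
  then show False using Legendre_one Legendre_minus_one \<open>2 < p\<close> assms by simp
qed

lemma norm_one_unit_gt_one_coeffs:
  fixes a b m :: int
  assumes "m > 0" "a\<^sup>2 - m * b\<^sup>2 = 1" "a + b * sqrt m > 1"
  shows "a \<ge> 2" "b \<ge> 1"
proof -
  define s where "s = sqrt m"
  have "s > 0" "s\<^sup>2 = m" unfolding s_def using assms(1) by auto
  have "(a + b * s) * (a - b * s) = of_int (a\<^sup>2 - m * b\<^sup>2)"
    using \<open>s\<^sup>2 = m\<close> by (simp add: algebra_simps power2_eq_square)
  then have "a - b * s = 1 / (a + b * s)"
    using assms(2,3) unfolding s_def by (simp add: eq_divide_eq mult.commute)
  then have "0 < a - b * s" "a - b * s < 1" using assms(3) unfolding s_def by auto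
  then have "b * s > 0" "real_of_int (2 * a) > 1" using assms(3) unfolding s_def by auto
  then have "b > 0" "a \<ge> 1" using \<open>s > 0\<close> by (auto simp: zero_less_mult_iff)
  moreover have "m * b\<^sup>2 \<ge> 1" using assms(1) \<open>b > 0\<close> by (simp add: int_one_le_iff_zero_less)
  moreover have "a \<noteq> 1" using assms(2) \<open>m * b\<^sup>2 \<ge> 1\<close> by auto
  ultimately show "a \<ge> 2" "b \<ge> 1" by auto
qed

text \<open>The unit \<open>(u + v\<surd>m)\<^sup>2\<close> exceeds the smaller unit \<open>u + v\<surd>m > 1\<close>.\<close>
lemma fundamental_unit_not_square:
  fixes m u v :: int
  assumes "m > 0" "is_unit_Zsqrt m u v" "u > 0" "v > 0"
  shows "\<not> fundamental_unit m (u\<^sup>2 + m * v\<^sup>2) (2 * u * v)"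
proof
  define \<eta> where "\<eta> = u + v * sqrt m"
  assume "fundamental_unit m (u\<^sup>2 + m * v\<^sup>2) (2 * u * v)"
  moreover have "\<eta> > 1" unfolding \<eta>_def using assms(1,3,4)
    by (smt (verit) mult_pos_pos of_int_less_1_iff of_int_pos real_sqrt_gt_zero)
  ultimately have "of_int (u\<^sup>2 + m * v\<^sup>2) + of_int (2 * u * v) * sqrt m \<le> \<eta>"
    using assms(2) unfolding fundamental_unit_def \<eta>_def by blast
  moreover have "of_int (u\<^sup>2 + m * v\<^sup>2) + of_int (2 * u * v) * sqrt m = \<eta> * \<eta>"
    unfolding \<eta>_def using assms(1) by (simp add: algebra_simps power2_eq_square)
  ultimately show False using \<open>\<eta> > 1\<close> by (smt (verit) mult_le_cancel_left2)
qed

lemma coprime_add_one_diff_one: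
  fixes a :: int
  assumes "even a"
  shows "coprime (a + 1) (a - 1)"
proof (rule coprimeI)
  fix c assume "c dvd a + 1" "c dvd a - 1"
  then have "c dvd (1 - a div 2) * (a + 1) + a div 2 * (a - 1)" by simp
  moreover have "(1 - a div 2) * (a + 1) + a div 2 * (a - 1) = 1"
    using assms by (auto simp: algebra_simps elim!: evenE)
  ultimately show "is_unit c" by simp
qed

lemma prod_mod_8_eq_5:
  fixes f :: "'a \<Rightarrow> int"
  assumes "finite A" "\<forall>x\<in>A. f x mod 8 = 5"
  shows "(\<Prod>x\<in>A. f x) mod 8 = (if even (card A) then 1 else 5)"
  using assms
proof (induction A rule: finite_induct)
  case empty
  then show ?case by simp
next
  case (insert x F)
  have "(\<Prod>x\<in>insert x F. f x) mod 8 = (f x mod 8 * ((\<Prod>x\<in>F. f x) mod 8)) mod 8"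
    unfolding prod.insert[OF insert(1,2)] by (rule mod_mult_eq[symmetric])
  also have "\<dots> = (5 * (if even (card F) then 1 else 5)) mod 8" using insert by simp
  finally show ?case using insert by simp
qed

lemma odd_square_mod_8:
  fixes u :: int
  assumes "odd u"
  shows "u\<^sup>2 mod 8 = 1"
proof -
  have "u mod 8 = 1 \<or> u mod 8 = 3 \<or> u mod 8 = 5 \<or> u mod 8 = 7" using assms by presburger
  moreover have "u\<^sup>2 mod 8 = (u mod 8)\<^sup>2 mod 8" by (simp add: power_mod)
  ultimately show ?thesis by auto
qed

lemma neg_one_power_eq_iff: "((-1::int) ^ a = (-1) ^ b) \<longleftrightarrow> (even a \<longleftrightarrow> even b)"
  by (cases "even a"; cases "even b") auto

lemma odd_card_remove_iff:
  assumes "x \<in> A" "finite A"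
  shows "odd (card (A - {x})) \<longleftrightarrow> even (card A)"
  using assms card_gt_0_iff[of A] by (auto simp: card_Diff_singleton)

section \<open>Deng--Li primes\<close>

locale deng_li =
  fixes n :: nat and l :: "nat \<Rightarrow> nat"
  assumes n_ge_2: "n \<ge> 2" and even_n: "even n"
    and prime_l: "\<forall>i\<in>{1..n}. prime (l i)"
    and inj_l: "inj_on l {1..n}"
    and l1_mod_8: "l 1 mod 8 = 3"
    and l_mod_8: "\<forall>i\<in>{2..n}. l i mod 8 = 5"
    and Legendre_1_2: "Legendre (int (l 1)) (int (l 2)) = -1"
    and Legendre_1_j: "\<forall>j\<in>{3..n}. Legendre (int (l 1)) (int (l j)) = 1"
    and Legendre_i_j: "\<forall>i j. 2 \<le> i \<and> i < j \<and> j \<le> n \<longrightarrow> Legendre (int (l i)) (int (l j)) = -1"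
begin

definition lprod :: "nat set \<Rightarrow> int" where
  "lprod S = (\<Prod>i\<in>S. int (l i))"

text \<open>For \<open>j \<noteq> k\<close>, \<open>nonresidue k j\<close> says that \<open>\<ell>\<^sub>j\<close> is a quadratic nonresidue modulo \<open>\<ell>\<^sub>k\<close>.\<close>
definition nonresidue :: "nat \<Rightarrow> nat \<Rightarrow> bool" where
  "nonresidue k j \<longleftrightarrow> (if k = 1 then j = 2 else if j = 1 then k = 2 else True)"

lemma prime_l_at: "i \<in> {1..n} \<Longrightarrow> prime (l i)"
  using prime_l by blast

lemma l_mod_8_cases: "i \<in> {1..n} \<Longrightarrow> l i mod 8 = 3 \<or> l i mod 8 = 5"
  using l1_mod_8 l_mod_8 by (cases "i = 1") auto

lemma l_gt_2: "i \<in> {1..n} \<Longrightarrow> 2 < l i"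
  using l_mod_8_cases by fastforce

lemma l_mod_4:
  assumes "k \<in> {1..n}"
  shows "l k mod 4 = (if k = 1 then 3 else 1)"
proof (cases "k = 1")
  case True
  then show ?thesis using l1_mod_8 by presburger
next
  case False
  then have "l k mod 8 = 5" using l_mod_8 assms by auto
  with False show ?thesis by presburger
qed

lemma Legendre_minus_one_l: "k \<in> {1..n} \<Longrightarrow> Legendre (-1) (int (l k)) = (if k = 1 then -1 else 1)"
  using Legendre_minus_one[OF prime_l_at l_gt_2] l_mod_4 by auto

lemma Legendre_l_swap:
  assumes "i \<in> {1..n}" "j \<in> {2..n}" "i \<noteq> j"
  shows "Legendre (int (l j)) (int (l i)) = Legendre (int (l i)) (int (l j))"
proof -
  have "l j \<noteq> l i" using inj_l assms by (auto dest: inj_onD)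
  moreover have "l j mod 4 = 1" using l_mod_4 assms(2) by auto
  ultimately show ?thesis
    using Legendre_swap_if_1_mod_4 prime_l_at l_gt_2 assms by auto
qed

lemma Legendre_l:
  assumes "j \<in> {1..n}" "k \<in> {1..n}" "j \<noteq> k"
  shows "Legendre (int (l j)) (int (l k)) = (if nonresidue k j then -1 else 1)"
proof -
  consider "j = 1" | "k = 1" | "2 \<le> j" "j < k" | "2 \<le> k" "k < j"
    using assms by fastforce
  then show ?thesis
  proof cases
    case 1 then show ?thesis
      using assms Legendre_1_2 Legendre_1_j by (cases "k = 2") (auto simp: nonresidue_def)
  next
    case 2 then show ?thesis
      using assms Legendre_1_2 Legendre_1_j Legendre_l_swap[of 1 j]
      by (cases "j = 2") (auto simp: nonresidue_def)
  next
    case 3 then show ?thesis using assms Legendre_i_j by (auto simp: nonresidue_def)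
  next
    case 4 then show ?thesis
      using assms Legendre_i_j Legendre_l_swap[of k j] by (auto simp: nonresidue_def)
  qed
qed

lemma Legendre_lprod:
  assumes "S \<subseteq> {1..n}" "k \<in> {1..n} - S"
  shows "Legendre (lprod S) (int (l k)) = (-1) ^ card {j\<in>S. nonresidue k j}"
proof -
  have "finite S" using assms(1) finite_subset by blast
  have "Legendre (lprod S) (int (l k)) = (\<Prod>j\<in>S. Legendre (int (l j)) (int (l k)))"
    unfolding lprod_def using Legendre_prod[OF prime_l_at l_gt_2 \<open>finite S\<close>] assms(2) by blast
  also have "\<dots> = (\<Prod>j\<in>S. if nonresidue k j then -1 else 1)"
    using assms by (intro prod.cong refl Legendre_l) auto
  also have "\<dots> = (-1) ^ card {j\<in>S. nonresidue k j}"
    using \<open>finite S\<close> by (simp add: prod.If_cases Int_def)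
  finally show ?thesis .
qed

text \<open>
  Legendre symbols of \<open>d u\<^sup>2 \<equiv> c\<close> modulo the primes outside \<open>S\<close> and of \<open>-d' v\<^sup>2 \<equiv> c\<close>
  modulo those in \<open>S\<close>; here \<open>(2/\<ell>\<^sub>k) = -1\<close> for all \<open>k\<close>, while \<open>(-1/\<ell>\<^sub>k) = -1\<close> only for \<open>k = 1\<close>.
\<close>
lemma form_parity_conditions:
  fixes u v c :: int
  assumes S: "S \<subseteq> {1..n}" and form: "lprod S * u\<^sup>2 - lprod ({1..n} - S) * v\<^sup>2 = c"
    and c: "c = 1 \<or> c = 2"
  shows "k \<in> {1..n} - S \<Longrightarrow> odd (card {j\<in>S. nonresidue k j}) \<longleftrightarrow> c = 2"
    and "k \<in> S \<Longrightarrow> odd (card {j\<in>{1..n} - S. nonresidue k j}) \<longleftrightarrow> (c = 2 \<longleftrightarrow> k \<noteq> 1)"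
proof -
  have "finite S" using S finite_subset by blast
  have Legendre_c: "Legendre c (int (l k)) = (-1) ^ (if c = 2 then 1 else 0)"
    and c_ndvd: "\<not> int (l k) dvd c" if "k \<in> {1..n}" for k
    using c Legendre_one Legendre_two l_mod_8_cases prime_l_at l_gt_2[OF that]
      zdvd_imp_le[of "int (l k)" c] that by auto
  show "odd (card {j\<in>S. nonresidue k j}) \<longleftrightarrow> c = 2" if k: "k \<in> {1..n} - S"
  proof -
    have "int (l k) dvd lprod ({1..n} - S)" unfolding lprod_def using k by (intro dvd_prodI) auto
    then have "Legendre (lprod S) (int (l k)) = Legendre c (int (l k))"
      using Legendre_eq_of_form[OF prime_l_at l_gt_2 _ form c_ndvd] k by blast
    then show ?thesis
      using Legendre_lprod[OF S k] Legendre_c k by (simp add: neg_one_power_eq_iff)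
  qed
  show "odd (card {j\<in>{1..n} - S. nonresidue k j}) \<longleftrightarrow> (c = 2 \<longleftrightarrow> k \<noteq> 1)" if k: "k \<in> S"
  proof -
    have kI: "k \<in> {1..n}" using k S by blast
    have "int (l k) dvd lprod S" unfolding lprod_def by (rule dvd_prodI[OF \<open>finite S\<close> k])
    then have dvd: "int (l k) dvd - lprod S" by simp
    have "(- lprod ({1..n} - S)) * v\<^sup>2 - (- lprod S) * u\<^sup>2 = c" using form by simp
    from Legendre_eq_of_form[OF prime_l_at[OF kI] l_gt_2[OF kI] dvd this c_ndvd[OF kI]]
    have "Legendre (- lprod ({1..n} - S)) (int (l k)) = Legendre c (int (l k))" .
    moreover have "Legendre (- lprod ({1..n} - S)) (int (l k))
        = Legendre (-1) (int (l k)) * Legendre (lprod ({1..n} - S)) (int (l k))"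
      using Legendre_mult[OF prime_l_at[OF kI] l_gt_2[OF kI], of "-1" "lprod ({1..n} - S)"] by simp
    moreover have "Legendre (lprod ({1..n} - S)) (int (l k))
        = (-1) ^ card {j\<in>{1..n} - S. nonresidue k j}"
      using k kI by (intro Legendre_lprod) auto
    moreover have "Legendre (-1) (int (l k)) = (-1) ^ (if k = 1 then 1 else 0)"
      using Legendre_minus_one_l[OF kI] by simp
    ultimately have "(-1::int) ^ ((if k = 1 then 1 else 0) + card {j\<in>{1..n} - S. nonresidue k j})
        = (-1) ^ (if c = 2 then 1 else 0)"
      using Legendre_c[OF kI] by (metis power_add)
    then show ?thesis by (auto simp: neg_one_power_eq_iff split: if_splits)
  qed
qed

lemma odd_card_complement:
  assumes "S \<subseteq> {1..n}"
  shows "odd (card ({1..n} - S)) \<longleftrightarrow> odd (card S)"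
proof -
  have "card ({1..n} - S) = n - card S" "card S \<le> n"
    using assms card_mono[OF _ assms] by (auto simp: card_Diff_subset finite_subset)
  then show ?thesis using even_n by auto
qed

lemma form_parities:
  fixes u v c :: int
  assumes S: "S \<subseteq> {1..n}" and form: "lprod S * u\<^sup>2 - lprod ({1..n} - S) * v\<^sup>2 = c"
    and c: "c = 1 \<or> c = 2"
  shows "2 \<in> S \<longleftrightarrow> c = 2"
    and "odd (card S) \<longleftrightarrow> c = 2"
    and "k \<in> {3..n} - S \<Longrightarrow> odd (card (S - {1})) \<longleftrightarrow> c = 2"
    and "k \<in> {3..n} \<inter> S \<Longrightarrow> odd (card ({1..n} - S - {1})) \<longleftrightarrow> c = 2"
proof -
  note cond = form_parity_conditions[OF S form c]
  have "1 \<in> {1..n}" "2 \<in> {1..n}" using n_ge_2 by auto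
  have nr1: "card {j\<in>W. nonresidue 1 j} = (if 2 \<in> W then 1 else 0)" for W
  proof -
    have "{j\<in>W. nonresidue 1 j} = (if 2 \<in> W then {2} else {})" by (auto simp: nonresidue_def)
    then show ?thesis by simp
  qed
  have nr2: "{j\<in>W. nonresidue 2 j} = W" for W by (auto simp: nonresidue_def)
  have nrk: "k \<ge> 3 \<Longrightarrow> {j\<in>W. nonresidue k j} = W - {1}" for W k by (auto simp: nonresidue_def)
  show "2 \<in> S \<longleftrightarrow> c = 2"
    using cond[of 1] \<open>1 \<in> {1..n}\<close> \<open>2 \<in> {1..n}\<close> unfolding nr1 by (cases "1 \<in> S") (auto split: if_splits)
  show "odd (card S) \<longleftrightarrow> c = 2"
  proof (cases "2 \<in> S")
    case True
    then have "odd (card ({1..n} - S)) \<longleftrightarrow> c = 2" using cond(2)[OF True] unfolding nr2 by simp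
    then show ?thesis using odd_card_complement[OF S] by simp
  next
    case False
    then show ?thesis using cond(1)[of 2] \<open>2 \<in> {1..n}\<close> unfolding nr2 by simp
  qed
  show "odd (card (S - {1})) \<longleftrightarrow> c = 2" if "k \<in> {3..n} - S"
    using cond(1)[of k] nrk[of k S] that by simp
  show "odd (card ({1..n} - S - {1})) \<longleftrightarrow> c = 2" if "k \<in> {3..n} \<inter> S"
    using cond(2)[of k] nrk[of k "{1..n} - S"] that by simp
qed

lemma form_one_imp_empty:
  fixes u v :: int
  assumes S: "S \<subseteq> {1..n}" and form: "lprod S * u\<^sup>2 - lprod ({1..n} - S) * v\<^sup>2 = 1"
  shows "S = {}"
proof (rule ccontr)
  assume "S \<noteq> {}"
  note par = form_parities[OF S form, simplified]
  have "finite S" using S finite_subset by blast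
  have even_T: "even (card ({1..n} - S))" using par(2) odd_card_complement[OF S] by simp
  have "S \<noteq> {1}" using par(2) by auto
  with \<open>S \<noteq> {}\<close> obtain k where "k \<in> S" "k \<noteq> 1" by blast
  moreover have "k \<in> {1..n}" "k \<noteq> 2" using \<open>k \<in> S\<close> S par(1) by auto
  ultimately have k: "k \<in> {3..n} \<inter> S" by auto
  have "1 \<in> S"
  proof (rule ccontr)
    assume "1 \<notin> S"
    then have "1 \<in> {1..n} - S" using n_ge_2 by simp
    then have "odd (card ({1..n} - S - {1}))"
      using odd_card_remove_iff[of 1 "{1..n} - S"] even_T by simp
    with par(4) k show False by simp
  qed
  have "2 \<in> {1..n} - S" using par(1) n_ge_2 by auto
  moreover have "{1..n} - S \<noteq> {2}" using even_T by auto
  ultimately obtain k' where "k' \<in> {1..n} - S" "k' \<noteq> 2" by blast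
  moreover have "k' \<noteq> 1" using \<open>k' \<in> {1..n} - S\<close> \<open>1 \<in> S\<close> by blast
  ultimately have "k' \<in> {3..n} - S" by auto
  with par(3) par(2) odd_card_remove_iff[OF \<open>1 \<in> S\<close> \<open>finite S\<close>] show False by simp
qed

lemma form_two_imp_odd_card:
  fixes u v :: int
  assumes S: "S \<subseteq> {1..n}" and form: "lprod S * u\<^sup>2 - lprod ({1..n} - S) * v\<^sup>2 = 2"
  shows "1 \<notin> S" "odd (card S)"
proof -
  note par = form_parities[OF S form, simplified]
  show "odd (card S)" using par(2) .
  show "1 \<notin> S"
  proof
    assume "1 \<in> S"
    have "finite S" using S finite_subset by blast
    have "odd (card ({1..n} - S))" using par(2) odd_card_complement[OF S] by simp
    then obtain k where "k \<in> {1..n} - S" by (metis card.empty even_zero ex_in_conv)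
    moreover have "k \<noteq> 1" "k \<noteq> 2" using \<open>k \<in> {1..n} - S\<close> \<open>1 \<in> S\<close> par(1) by auto
    ultimately have "k \<in> {3..n} - S" by auto
    with par(3) par(2) odd_card_remove_iff[OF \<open>1 \<in> S\<close> \<open>finite S\<close>] show False by simp
  qed
qed

lemma norm_one_even_coeff_mod_8:
  fixes a b :: int
  assumes norm: "a\<^sup>2 - lprod {1..n} * b\<^sup>2 = 1" and "even a" "a \<ge> 2"
  shows "a mod 8 = 4"
proof -
  have "(a + 1) * (a - 1) = (\<Prod>i\<in>{1..n}. int (l i)) * b\<^sup>2"
    using norm unfolding lprod_def by (simp add: algebra_simps power2_eq_square)
  moreover have "a + 1 > 0" "a - 1 > 0" using \<open>a \<ge> 2\<close> by auto
  ultimately obtain S u v where S: "S \<subseteq> {1..n}" "u > 0"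
      and a_plus: "a + 1 = lprod S * u\<^sup>2" and "a - 1 = lprod ({1..n} - S) * v\<^sup>2"
    using coprime_factors_of_prod_primes_square[OF finite_atLeastAtMost prime_l inj_l
        _ _ coprime_add_one_diff_one[OF \<open>even a\<close>]]
    unfolding lprod_def by blast
  then have "lprod S * u\<^sup>2 - lprod ({1..n} - S) * v\<^sup>2 = 2" by linarith
  then have "1 \<notin> S" "odd (card S)" using form_two_imp_odd_card S(1) by blast+
  have "\<forall>i\<in>S. int (l i) mod 8 = 5"
  proof
    fix i assume "i \<in> S"
    then have "i \<in> {1..n}" "i \<noteq> 1" using S(1) \<open>1 \<notin> S\<close> by auto
    then have "l i mod 8 = 5" using l_mod_8 by simp
    then have "int (l i mod 8) = 5" by simp
    then show "int (l i) mod 8 = 5" by (simp add: of_nat_mod)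
  qed
  moreover have "finite S" using S(1) finite_subset by blast
  ultimately have "lprod S mod 8 = 5"
    using prod_mod_8_eq_5[of S "\<lambda>i. int (l i)"] \<open>odd (card S)\<close> unfolding lprod_def by simp
  moreover have "odd u"
  proof -
    have "odd (a + 1)" using \<open>even a\<close> by simp
    then show ?thesis unfolding a_plus by (simp add: even_mult_iff)
  qed
  moreover have "(a + 1) mod 8 = (lprod S mod 8 * (u\<^sup>2 mod 8)) mod 8"
    unfolding a_plus by (rule mod_mult_eq[symmetric])
  ultimately have "(a + 1) mod 8 = 5" using odd_square_mod_8 by simp
  then show ?thesis by presburger
qed

text \<open>For odd \<open>a = 2k + 1\<close>, \<open>b = 2c\<close>, and the coprime factors of \<open>(k + 1) k = m c\<^sup>2\<close> must be \<open>u\<^sup>2\<close> and \<open>m v\<^sup>2\<close>.\<close>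
lemma norm_one_odd_coeff_square:
  fixes a b :: int
  assumes norm: "a\<^sup>2 - lprod {1..n} * b\<^sup>2 = 1" and "odd a" "a \<ge> 2" "b \<ge> 1"
  obtains u v where "u > 0" "v > 0" "u\<^sup>2 - lprod {1..n} * v\<^sup>2 = 1"
    "a = u\<^sup>2 + lprod {1..n} * v\<^sup>2" "b = 2 * u * v"
proof -
  define m where "m = lprod {1..n}"
  obtain k where k: "a = 2 * k + 1" using \<open>odd a\<close> by (metis oddE)
  have "odd m" unfolding m_def lprod_def
    using prime_l l_gt_2 prime_odd_nat by (auto simp: even_prod_iff)
  moreover have "m * b\<^sup>2 = a\<^sup>2 - 1" using norm unfolding m_def by simp
  then have "even (m * b\<^sup>2)" using \<open>odd a\<close> by simp
  ultimately have "even b" by (simp add: even_mult_iff)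
  then obtain c where c: "b = 2 * c" by blast
  have kk: "(k + 1) * k = m * c\<^sup>2"
    using norm k c unfolding m_def by (simp add: algebra_simps power2_eq_square)
  then have "(k + 1) * k = (\<Prod>i\<in>{1..n}. int (l i)) * c\<^sup>2" unfolding m_def lprod_def .
  moreover have "k + 1 > 0" "k > 0" using k \<open>a \<ge> 2\<close> by auto
  ultimately obtain S u v where S: "S \<subseteq> {1..n}" "u > 0" "v > 0"
      and k_plus: "k + 1 = lprod S * u\<^sup>2" and k_eq: "k = lprod ({1..n} - S) * v\<^sup>2"
    using coprime_factors_of_prod_primes_square[OF finite_atLeastAtMost prime_l inj_l
        _ _ coprime_add_one_left]
    unfolding lprod_def by blast
  then have "lprod S * u\<^sup>2 - lprod ({1..n} - S) * v\<^sup>2 = 1" by linarith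
  then have "S = {}" by (rule form_one_imp_empty[OF S(1)])
  then have u: "u\<^sup>2 = k + 1" and v: "m * v\<^sup>2 = k"
    using k_plus k_eq unfolding m_def lprod_def by simp_all
  have "m * c\<^sup>2 = u\<^sup>2 * (m * v\<^sup>2)" by (metis kk u v mult.commute)
  also have "\<dots> = m * (u * v)\<^sup>2" by (simp add: power_mult_distrib ac_simps)
  moreover have "m > 0" unfolding m_def lprod_def using prime_l by (auto intro!: prod_pos simp: prime_gt_0_nat)
  ultimately have "c\<^sup>2 = (u * v)\<^sup>2" by simp
  then have "c = u * v"
    using \<open>b \<ge> 1\<close> c S(2,3) by (simp add: power2_eq_iff_nonneg)
  moreover have "u\<^sup>2 - m * v\<^sup>2 = 1" "a = u\<^sup>2 + m * v\<^sup>2" using k u v by simp_all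
  ultimately show thesis using that S(2,3) c unfolding m_def by simp
qed

end

theorem lemma5p4:
  fixes n :: nat and l :: "nat \<Rightarrow> nat" and m a b :: int
  assumes "n \<ge> 2" and "even n"
    and "\<forall>i\<in>{1..n}. prime (l i)"
    and "inj_on l {1..n}"
    and "l 1 mod 8 = 3"
    and "\<forall>i\<in>{2..n}. l i mod 8 = 5"
    and "Legendre (int (l 1)) (int (l 2)) = -1"
    and "\<forall>j\<in>{3..n}. Legendre (int (l 1)) (int (l j)) = 1"
    and "\<forall>i j. 2 \<le> i \<and> i < j \<and> j \<le> n \<longrightarrow> Legendre (int (l i)) (int (l j)) = -1"
    and "m = (\<Prod>i\<in>{1..n}. int (l i))"
    and "fundamental_unit m a b"
  shows "\<exists>a'. odd a' \<and> a = 4 * a'"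
proof -
  interpret deng_li n l using assms(1-9) by unfold_locales
  have m: "m = lprod {1..n}" using assms(10) by (simp add: lprod_def)
  have "1 \<in> {1..n}" using assms(1) by simp
  have "m > 0" unfolding m lprod_def using prime_l by (auto intro!: prod_pos simp: prime_gt_0_nat)
  have "int (l 1) dvd m" unfolding m lprod_def using \<open>1 \<in> {1..n}\<close> by (intro dvd_prodI) auto
  then have norm: "a\<^sup>2 - m * b\<^sup>2 = 1"
    using assms(11) norm_ne_minus_one[OF prime_l_at[OF \<open>1 \<in> {1..n}\<close>]] l_mod_4[OF \<open>1 \<in> {1..n}\<close>]
    unfolding fundamental_unit_def is_unit_Zsqrt_def by auto
  have "a \<ge> 2" "b \<ge> 1"
    using norm_one_unit_gt_one_coeffs[OF \<open>m > 0\<close> norm] assms(11) unfolding fundamental_unit_def by auto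
  show ?thesis
  proof (cases "even a")
    case True
    then have "a mod 8 = 4" using norm_one_even_coeff_mod_8 norm \<open>a \<ge> 2\<close> m by blast
    then show ?thesis by (intro exI[of _ "a div 4"]) presburger
  next
    case False
    then obtain u v where "u > 0" "v > 0" "u\<^sup>2 - m * v\<^sup>2 = 1" "a = u\<^sup>2 + m * v\<^sup>2" "b = 2 * u * v"
      using norm_one_odd_coeff_square[of a b] norm \<open>a \<ge> 2\<close> \<open>b \<ge> 1\<close> unfolding m by blast
    then show ?thesis
      using fundamental_unit_not_square[OF \<open>m > 0\<close>] assms(11) by (auto simp: is_unit_Zsqrt_def)
  qed
qed

end
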